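(* Let $\mathbb{F}_q$ be a finite field and let $\mathcal{M}=\mathbb{F}_q\times\mathbb{F}_q^{*}\times\mathbb{F}_q$ with the relation: $(x_1,y_1,z_1)$ and $(x_2,y_2,z_2)$ commute iff $x_1y_2-y_1x_2=z_1-z_2$. Then: (1) every abelian subset of $\mathcal{M}$ has cardinality at most $q$; (2) there is no partition of $\mathcal{M}$ into fewer than $q(q-1)$ abelian subsets; (3) the maximum cardinality of an abelian subset of $\mathcal{M}$ that is not contained in a strictly larger abelian subset is $q$.
   Context: A subset of $\mathcal{M}$ is abelian if any two distinct elements of it commute. *)

theory Defs
  imports Main "HOL-Library.Disjoint_Sets" "HOL-Library.Cardinality"
begin

definition Mset :: "('a::{finite,field} \<times> 'a \<times> 'a) set" where
  "Mset = {(x, y, z). y \<noteq> 0}"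

definition commutes :: "('a::{finite,field} \<times> 'a \<times> 'a) \<Rightarrow> ('a \<times> 'a \<times> 'a) \<Rightarrow> bool" where
  "commutes a b = (case a of (x1, y1, z1) \<Rightarrow> case b of (x2, y2, z2) \<Rightarrow>
      x1 * y2 - y1 * x2 = z1 - z2)"

definition abelian :: "('a::{finite,field} \<times> 'a \<times> 'a) set \<Rightarrow> bool" where
  "abelian S = (S \<subseteq> Mset \<and> (\<forall>a\<in>S. \<forall>b\<in>S. a \<noteq> b \<longrightarrow> commutes a b))"

definition maximal_abelian :: "('a::{finite,field} \<times> 'a \<times> 'a) set \<Rightarrow> bool" where
  "maximal_abelian S = (abelian S \<and> (\<forall>T. abelian T \<and> S \<subseteq> T \<longrightarrow> T = S))"

end

theory Submission
  imports Defs
begin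

text \<open>Fix a point \<open>(x\<^sub>0, y\<^sub>0, z\<^sub>0)\<close> of an abelian set \<open>S\<close>. Commuting with it forces
  \<open>z = z\<^sub>0 - x\<^sub>0 y + y\<^sub>0 x\<close> for every \<open>(x, y, z) \<in> S\<close>; substituting this into the
  commutation relation of two further points shows that the vectors \<open>(x - x\<^sub>0, y - y\<^sub>0)\<close>
  have pairwise vanishing determinant, i.e. lie on one line through the origin of \<open>\<bbbF>\<^sub>q\<^sup>2\<close>.
  Since \<open>(x, y)\<close> determines \<open>z\<close>, this gives \<open>|S| \<le> q\<close>. Counting \<open>|\<M>| = q\<^sup>2(q - 1)\<close>
  bounds the size of a partition, and \<open>{(x, 1, x)}\<close> is an abelian set of size \<open>q\<close>,
  hence maximal.\<close>

lemma card_le_CARD_if_det_zero: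
  fixes V :: "('a::{finite,field} \<times> 'a) set"
  assumes det: "\<And>u v. u \<in> V \<Longrightarrow> v \<in> V \<Longrightarrow> fst u * snd v = snd u * fst v"
  shows "card V \<le> CARD('a)"
proof (cases "V \<subseteq> {(0, 0)}")
  case True
  then have "card V \<le> 1" using card_mono[of "{(0, 0)}" V] by simp
  moreover have "1 \<le> CARD('a)" by (simp add: Suc_leI)
  ultimately show ?thesis by linarith
next
  case False
  then obtain a b where w: "(a, b) \<in> V" "(a, b) \<noteq> (0, 0)" by auto
  have "inj_on fst V \<or> inj_on snd V"
  proof (cases "a = 0")
    case False
    have "inj_on fst V"
    proof (rule inj_onI)
      fix u v assume "u \<in> V" "v \<in> V" "fst u = fst v"
      then have "a * snd u = a * snd v" using det[OF w(1) \<open>u \<in> V\<close>] det[OF w(1) \<open>v \<in> V\<close>] by simp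
      with False \<open>fst u = fst v\<close> show "u = v" by (simp add: prod_eq_iff)
    qed
    then show ?thesis ..
  next
    case True
    with w(2) have "b \<noteq> 0" by simp
    have "inj_on snd V"
    proof (rule inj_onI)
      fix u v assume "u \<in> V" "v \<in> V" "snd u = snd v"
      then have "b * fst u = b * fst v"
        using det[OF w(1) \<open>u \<in> V\<close>] det[OF w(1) \<open>v \<in> V\<close>] True \<open>b \<noteq> 0\<close> by simp
      with \<open>b \<noteq> 0\<close> \<open>snd u = snd v\<close> show "u = v" by (simp add: prod_eq_iff)
    qed
    then show ?thesis ..
  qed
  then show ?thesis
    using card_image[of fst V] card_image[of snd V]
      card_mono[of UNIV "fst ` V"] card_mono[of UNIV "snd ` V"] by auto
qed

lemma commutes_refl: "commutes a a"
  by (cases a) (simp add: commutes_def mult.commute)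

lemma abelian_commutes: "abelian S \<Longrightarrow> a \<in> S \<Longrightarrow> b \<in> S \<Longrightarrow> commutes a b"
  unfolding abelian_def by (metis commutes_refl)

lemma card_abelian_le:
  fixes S :: "('a::{finite,field} \<times> 'a \<times> 'a) set"
  assumes "abelian S"
  shows "card S \<le> CARD('a)"
proof (cases "S = {}")
  case False
  then obtain x\<^sub>0 y\<^sub>0 z\<^sub>0 where p\<^sub>0: "(x\<^sub>0, y\<^sub>0, z\<^sub>0) \<in> S" by auto
  have rel: "x * y' - y * x' = z - z'" if "(x, y, z) \<in> S" "(x', y', z') \<in> S" for x y z x' y' z'
    using abelian_commutes[OF assms that] by (simp add: commutes_def)
  have z_eq: "z = z\<^sub>0 - x\<^sub>0 * y + y\<^sub>0 * x" if "(x, y, z) \<in> S" for x y z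
    using rel[OF p\<^sub>0 that] by (simp add: algebra_simps)
  define shift where "shift = (\<lambda>(x, y, z::'a). (x - x\<^sub>0, y - y\<^sub>0))"
  have "inj_on shift S"
  proof (rule inj_onI)
    fix p p' assume "p \<in> S" "p' \<in> S" "shift p = shift p'"
    moreover obtain x y z x' y' z' where pq: "p = (x, y, z)" "p' = (x', y', z')"
      by (metis prod_cases3)
    ultimately have "(x, y, z) \<in> S" "(x', y', z') \<in> S" "x = x'" "y = y'"
      by (simp_all add: shift_def)
    then show "p = p'" using pq z_eq[of x y z] z_eq[of x' y' z'] by simp
  qed
  moreover have "card (shift ` S) \<le> CARD('a)"
  proof (rule card_le_CARD_if_det_zero)
    fix u v assume "u \<in> shift ` S" "v \<in> shift ` S"
    then obtain x y z x' y' z' where p: "(x, y, z) \<in> S" and p': "(x', y', z') \<in> S"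
      and uv: "u = shift (x, y, z)" "v = shift (x', y', z')"
      by (metis imageE prod_cases3)
    have "(x - x\<^sub>0) * (y' - y\<^sub>0) - (y - y\<^sub>0) * (x' - x\<^sub>0)
        = (x * y' - y * x') - ((z\<^sub>0 - x\<^sub>0 * y + y\<^sub>0 * x) - (z\<^sub>0 - x\<^sub>0 * y' + y\<^sub>0 * x'))"
      by (simp add: algebra_simps)
    also have "\<dots> = 0" using rel[OF p p'] z_eq[OF p] z_eq[OF p'] by simp
    finally show "fst u * snd v = snd u * fst v" by (simp add: uv shift_def)
  qed
  ultimately show ?thesis by (simp add: card_image)
qed simp

lemma card_Mset: "card (Mset :: ('a::{finite,field} \<times> 'a \<times> 'a) set) = CARD('a) * (CARD('a) - 1) * CARD('a)"
proof -
  have M: "{(x, y, z). (y::'a) \<noteq> 0} = UNIV \<times> (UNIV - {0}) \<times> UNIV"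
    by auto
  show ?thesis unfolding Mset_def M by (simp add: card_cartesian_product card_Diff_singleton)
qed

lemma card_le_card_partition_mult:
  assumes "partition_on A P" "finite A" "\<And>S. S \<in> P \<Longrightarrow> card S \<le> k"
  shows "card A \<le> card P * k"
proof -
  have "card A = (\<Sum>S\<in>P. card S)"
    using assms(1,2) by (auto simp: partition_on_def intro: card_Union_disjoint finite_subset)
  also have "\<dots> \<le> card P * k" using sum_bounded_above[of P card k] assms(3) by simp
  finally show ?thesis .
qed

lemma maximal_abelian_if_card:
  fixes S :: "('a::{finite,field} \<times> 'a \<times> 'a) set"
  assumes "abelian S" "card S = CARD('a)"
  shows "maximal_abelian S"
  unfolding maximal_abelian_def
proof (intro conjI allI impI assms(1))
  fix T :: "('a \<times> 'a \<times> 'a) set" assume "abelian T \<and> S \<subseteq> T"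
  then show "T = S" using card_abelian_le[of T] assms(2) by (intro card_seteq[symmetric]) auto
qed

lemma abelian_diagonal: "abelian ((\<lambda>x. (x, 1, x)) ` (UNIV :: 'a::{finite,field} set))"
  by (auto simp: abelian_def commutes_def Mset_def)

theorem theorem6p6:
  shows "(\<forall>S :: ('a::{finite,field} \<times> 'a \<times> 'a) set. abelian S \<longrightarrow> card S \<le> CARD('a))
    \<and> (\<forall>P :: ('a \<times> 'a \<times> 'a) set set. partition_on Mset P \<and> (\<forall>S\<in>P. abelian S)
          \<longrightarrow> CARD('a) * (CARD('a) - 1) \<le> card P)
    \<and> (\<exists>S :: ('a \<times> 'a \<times> 'a) set. maximal_abelian S \<and> card S = CARD('a))
    \<and> (\<forall>S :: ('a \<times> 'a \<times> 'a) set. maximal_abelian S \<longrightarrow> card S \<le> CARD('a))"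
proof (intro conjI allI impI)
  fix P :: "('a \<times> 'a \<times> 'a) set set"
  assume "partition_on Mset P \<and> (\<forall>S\<in>P. abelian S)"
  then have "card (Mset :: ('a \<times> 'a \<times> 'a) set) \<le> card P * CARD('a)"
    by (intro card_le_card_partition_mult) (auto intro: card_abelian_le)
  then show "CARD('a) * (CARD('a) - 1) \<le> card P" by (simp add: card_Mset)
next
  let ?D = "(\<lambda>x. (x, 1, x)) ` (UNIV :: 'a set)"
  have "card ?D = CARD('a)" by (subst card_image) (auto simp: inj_on_def)
  then show "\<exists>S :: ('a \<times> 'a \<times> 'a) set. maximal_abelian S \<and> card S = CARD('a)"
    using maximal_abelian_if_card[OF abelian_diagonal] by blast
qed (auto simp: maximal_abelian_def card_abelian_le)

end
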